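(* Let $(\Omega,\mathcal{F},\mathbb{P})$ be a probability space and let $X,Y$ be real-valued random variables with $\mathbb{E}[|X|]<\infty$ and $\mathbb{E}[|Y|]<\infty$. For such a random variable $Z$ define the mean absolute deviation $\mathrm{MAD}(Z):=\mathbb{E}\big[|Z-\mathbb{E}[Z]|\big]$. Then $$\mathrm{MAD}(X+Y)=\mathrm{MAD}(X)+\mathrm{MAD}(Y)$$ if and only if $$(X-\mathbb{E}[X])(Y-\mathbb{E}[Y])\geq 0 \quad \mathbb{P}\text{-almost surely}.$$ *)

theory Defs
  imports "HOL-Probability.Probability"
begin

definition MAD :: "'a measure \<Rightarrow> ('a \<Rightarrow> real) \<Rightarrow> real" where
  "MAD M Z = (\<integral>x. \<bar>Z x - (\<integral>y. Z y \<partial>M)\<bar> \<partial>M)"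

end

theory Submission
  imports Defs
begin

text \<open>After centring, the claim is the equality case of the triangle inequality in \<open>L\<^sup>1\<close>:
  the defect \<open>\<bar>a\<bar> + \<bar>b\<bar> - \<bar>a + b\<bar>\<close> is pointwise nonnegative, so its integral vanishes iff
  it vanishes almost everywhere, i.e. iff \<open>a\<close> and \<open>b\<close> almost surely have no opposite signs.\<close>

lemma abs_add_eq_add_abs_iff:
  fixes a b :: "'a :: linordered_idom"
  shows "\<bar>a + b\<bar> = \<bar>a\<bar> + \<bar>b\<bar> \<longleftrightarrow> 0 \<le> a * b"
  by (auto simp: abs_if zero_le_mult_iff mult_le_0_iff)

lemma integral_abs_add_eq_iff_AE:
  fixes f g :: "'a \<Rightarrow> real"
  assumes f: "integrable M f" and g: "integrable M g"
  shows "(\<integral>x. \<bar>f x + g x\<bar> \<partial>M) = (\<integral>x. \<bar>f x\<bar> \<partial>M) + (\<integral>x. \<bar>g x\<bar> \<partial>M)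
    \<longleftrightarrow> (AE x in M. 0 \<le> f x * g x)"
proof -
  define defect where "defect = (\<lambda>x. \<bar>f x\<bar> + \<bar>g x\<bar> - \<bar>f x + g x\<bar>)"
  have defect_integrable: "integrable M defect"
    unfolding defect_def using f g by auto
  have defect_nonneg: "AE x in M. 0 \<le> defect x"
    unfolding defect_def by (simp add: abs_triangle_ineq)
  have "integral\<^sup>L M defect
      = (\<integral>x. \<bar>f x\<bar> \<partial>M) + (\<integral>x. \<bar>g x\<bar> \<partial>M) - (\<integral>x. \<bar>f x + g x\<bar> \<partial>M)"
    unfolding defect_def using f g
    by (simp add: Bochner_Integration.integral_diff Bochner_Integration.integral_add)
  then have "(\<integral>x. \<bar>f x + g x\<bar> \<partial>M) = (\<integral>x. \<bar>f x\<bar> \<partial>M) + (\<integral>x. \<bar>g x\<bar> \<partial>M)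
      \<longleftrightarrow> integral\<^sup>L M defect = 0"
    by argo
  also have "\<dots> \<longleftrightarrow> (AE x in M. defect x = 0)"
    using defect_integrable defect_nonneg by (rule integral_nonneg_eq_0_iff_AE)
  also have "\<dots> \<longleftrightarrow> (AE x in M. 0 \<le> f x * g x)"
  proof -
    have "defect x = 0 \<longleftrightarrow> 0 \<le> f x * g x" for x
      unfolding defect_def using abs_add_eq_add_abs_iff[of "f x" "g x"] by linarith
    then show ?thesis
      by simp
  qed
  finally show ?thesis .
qed

lemma (in finite_measure) MAD_add_eq_integral_abs_centred:
  assumes "integrable M X" and "integrable M Y"
  shows "MAD M (\<lambda>x. X x + Y x)
    = (\<integral>x. \<bar>(X x - (\<integral>y. X y \<partial>M)) + (Y x - (\<integral>y. Y y \<partial>M))\<bar> \<partial>M)"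
  unfolding MAD_def using assms by (simp add: algebra_simps)

theorem theorem1:
  fixes M :: "'a measure" and X Y :: "'a \<Rightarrow> real"
  assumes "prob_space M"
    and "X \<in> borel_measurable M" and "Y \<in> borel_measurable M"
    and "integrable M X" and "integrable M Y"
  shows "MAD M (\<lambda>\<omega>. X \<omega> + Y \<omega>) = MAD M X + MAD M Y \<longleftrightarrow>
         (AE \<omega> in M. (X \<omega> - (\<integral>x. X x \<partial>M)) * (Y \<omega> - (\<integral>y. Y y \<partial>M)) \<ge> 0)"
proof -
  interpret prob_space M by fact
  have "integrable M (\<lambda>\<omega>. X \<omega> - expectation X)" and "integrable M (\<lambda>\<omega>. Y \<omega> - expectation Y)"
    using assms by auto
  from integral_abs_add_eq_iff_AE[OF this] show ?thesis
    unfolding MAD_add_eq_integral_abs_centred[OF assms(4,5)] by (simp add: MAD_def)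
qed

end
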